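(* Let $G=(V,E)$ be a graph with a partition $(V_1,V_2)$ of $V$ such that $G[V_1]$ and $G[V_2]$ are $P_5$-free, and let $k$ be an integer. Suppose that $k\ge 1$, that $G$ contains a $P_5$, that every vertex of $G$ lies on some $P_5$ in $G$, and that every $P_5$ in $G$ contains at least $4$ vertices of $V_2$. Let $v\in V_2$ be an isolated vertex of $G[V_2]$, and let $F\subseteq V_2$ be a set such that $G\setminus F$ is $P_5$-free and $v\in F$. Then there exists a set $F'\subseteq V_2$ such that $G\setminus F'$ is $P_5$-free, $v\notin F'$, and $|F'|\le |F|$.
   Context: Graphs are finite, simple and undirected. A $P_5$ is a path on $5$ vertices (as a not necessarily induced subgraph); a graph is $P_5$-free if it contains no $P_5$. $G[X]$ denotes the subgraph induced by $X$, and $G\setminus F=G[V\setminus F]$. *)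

theory Defs
  imports Main
begin

definition simple_graph :: "'a set \<Rightarrow> ('a \<Rightarrow> 'a \<Rightarrow> bool) \<Rightarrow> bool" where
  "simple_graph V E \<longleftrightarrow> finite V \<and> (\<forall>x y. E x y \<longrightarrow> E y x) \<and> (\<forall>x. \<not> E x x)
     \<and> (\<forall>x y. E x y \<longrightarrow> x \<in> V \<and> y \<in> V)"

text \<open>A (not necessarily induced) path on 5 vertices in the induced subgraph G[X],
given as a list of its vertices in order.\<close>
definition is_P5 :: "('a \<Rightarrow> 'a \<Rightarrow> bool) \<Rightarrow> 'a set \<Rightarrow> 'a list \<Rightarrow> bool" where
  "is_P5 E X p \<longleftrightarrow> length p = 5 \<and> distinct p \<and> set p \<subseteq> X
     \<and> (\<forall>i < 4. E (p ! i) (p ! Suc i))"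

definition P5_free :: "('a \<Rightarrow> 'a \<Rightarrow> bool) \<Rightarrow> 'a set \<Rightarrow> bool" where
  "P5_free E X \<longleftrightarrow> \<not> (\<exists>p. is_P5 E X p)"

end

theory Submission
  imports Defs
begin

text \<open>
  Since every \<open>P\<^sub>5\<close> has at most one vertex outside \<open>V\<^sub>2\<close> and \<open>v\<close> has no neighbour
  in \<open>V\<^sub>2\<close>, every \<open>P\<^sub>5\<close> through \<open>v\<close> has the form \<open>v a x y z\<close> with \<open>a \<notin> V\<^sub>2\<close> and
  \<open>x, y, z \<in> V\<^sub>2\<close>; moreover all of them share the same \<open>a\<close>, for otherwise \<open>a' v a x y\<close> would
  be a \<open>P\<^sub>5\<close> with two vertices outside \<open>V\<^sub>2\<close>. If dropping \<open>v\<close> from \<open>F\<close> creates a \<open>P\<^sub>5\<close>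
  \<open>v a x y z\<close>, replace \<open>v\<close> by \<open>x\<close> in \<open>F\<close>: a surviving \<open>P\<^sub>5\<close> \<open>v a x' y' z'\<close> would yield
  the \<open>P\<^sub>5\<close> \<open>x a x' y' z'\<close> avoiding \<open>F\<close>.
\<close>

lemma simple_graph_symp: "simple_graph V E \<Longrightarrow> symp E"
  unfolding simple_graph_def symp_def by blast

lemma is_P5_Cons5:
  "is_P5 E X [a, b, c, d, e] \<longleftrightarrow>
     distinct [a, b, c, d, e] \<and> {a, b, c, d, e} \<subseteq> X \<and> E a b \<and> E b c \<and> E c d \<and> E d e"
  unfolding is_P5_def by (auto simp: less_Suc_eq numeral_eq_Suc)

lemma is_P5_obtain_vertices:
  assumes "is_P5 E X p"
  obtains a b c d e where "p = [a, b, c, d, e]"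
proof -
  have "length p = 5" using assms unfolding is_P5_def by simp
  then show thesis using that by (simp add: numeral_eq_Suc length_Suc_conv) blast
qed

lemma is_P5_mono: "is_P5 E X p \<Longrightarrow> set p \<subseteq> Y \<Longrightarrow> is_P5 E Y p"
  unfolding is_P5_def by auto

lemma is_P5_subset: "is_P5 E X p \<Longrightarrow> set p \<subseteq> X"
  unfolding is_P5_def by auto

lemma is_P5_rev:
  assumes "symp E" and "is_P5 E X p"
  shows "is_P5 E X (rev p)"
proof -
  obtain a b c d e where "p = [a, b, c, d, e]"
    using assms(2) by (rule is_P5_obtain_vertices)
  then show ?thesis using assms by (auto simp: is_P5_Cons5 dest: sympD)
qed

lemma is_P5_outside_unique:
  assumes "is_P5 E X p" and "4 \<le> card (set p \<inter> A)"
    and "u \<in> set p" "w \<in> set p" "u \<notin> A" "w \<notin> A"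
  shows "u = w"
proof (rule ccontr)
  assume "u \<noteq> w"
  have "card (set p) = 5"
    using assms(1) distinct_card unfolding is_P5_def by fastforce
  have "card (set p \<inter> A) \<le> card (set p - {u, w})"
    using assms(5,6) by (intro card_mono) auto
  also have "\<dots> = 3"
    using \<open>card (set p) = 5\<close> \<open>u \<noteq> w\<close> assms(3,4) by (simp add: card_Diff_subset)
  finally show False using assms(2) by simp
qed

lemma is_P5_through_isolated_vertex:
  assumes "symp E" and p: "is_P5 E X p" and many: "4 \<le> card (set p \<inter> A)"
    and iso: "\<forall>u \<in> A. \<not> E v u" and "v \<in> set p"
  obtains a x y z where "is_P5 E X [v, a, x, y, z]" "set [v, a, x, y, z] = set p"
    "a \<notin> A" "x \<in> A" "y \<in> A" "z \<in> A"
proof -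
  obtain p0 p1 p2 p3 p4 where p_eq: "p = [p0, p1, p2, p3, p4]"
    using p by (rule is_P5_obtain_vertices)
  have path: "distinct [p0, p1, p2, p3, p4]" "E p0 p1" "E p1 p2" "E p2 p3" "E p3 p4"
    using p unfolding p_eq is_P5_Cons5 by auto
  have nbr_outside: "u \<notin> A" if "E v u \<or> E u v" for u
    using that iso \<open>symp E\<close> by (auto dest: sympD)
  have outside_unique: "u = w" if "u \<in> set p" "w \<in> set p" "u \<notin> A" "w \<notin> A" for u w
    using is_P5_outside_unique[OF p many that] .
  have "v = p0 \<or> v = p4"
  proof (rule ccontr)
    assume "\<not> (v = p0 \<or> v = p4)"
    then consider "v = p1" | "v = p2" | "v = p3" using \<open>v \<in> set p\<close> p_eq by auto
    then show False
    proof cases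
      case 1
      then show False using path nbr_outside[of p0] nbr_outside[of p2] outside_unique[of p0 p2]
        unfolding p_eq by auto
    next
      case 2
      then show False using path nbr_outside[of p1] nbr_outside[of p3] outside_unique[of p1 p3]
        unfolding p_eq by auto
    next
      case 3
      then show False using path nbr_outside[of p2] nbr_outside[of p4] outside_unique[of p2 p4]
        unfolding p_eq by auto
    qed
  qed
  then obtain a x y z where q: "is_P5 E X [v, a, x, y, z]" "set [v, a, x, y, z] = set p"
  proof
    assume "v = p0"
    then show thesis using that[of p1 p2 p3 p4] p unfolding p_eq by simp
  next
    assume "v = p4"
    then show thesis using that[of p3 p2 p1 p0] is_P5_rev[OF \<open>symp E\<close> p] unfolding p_eq by auto
  qed
  have "a \<notin> A" using q(1) nbr_outside[of a] by (simp add: is_P5_Cons5)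
  moreover have "x \<in> A" "y \<in> A" "z \<in> A"
    using q \<open>a \<notin> A\<close> outside_unique[of a] by (auto simp: is_P5_Cons5)
  ultimately show ?thesis using q that by blast
qed

lemma P5_free_exchange:
  assumes "symp E"
    and many: "\<forall>p. is_P5 E V p \<longrightarrow> 4 \<le> card (set p \<inter> A)"
    and iso: "\<forall>u \<in> A. \<not> E v u"
    and free: "P5_free E (V - F)"
    and path: "is_P5 E V [v, a, x, y, z]" "a \<notin> A" "x \<in> A" "y \<in> A"
    and "x \<notin> F"
  shows "P5_free E (V - insert x (F - {v}))"
  unfolding P5_free_def
proof
  assume "\<exists>q. is_P5 E (V - insert x (F - {v})) q"
  then obtain q where q: "is_P5 E (V - insert x (F - {v})) q" by blast
  have q_sub: "set q \<subseteq> V - insert x (F - {v})" using q by (rule is_P5_subset)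
  have "v \<in> set q"
  proof (rule ccontr)
    assume "v \<notin> set q"
    then have "is_P5 E (V - F) q" using q_sub by (intro is_P5_mono[OF q]) auto
    then show False using free unfolding P5_free_def by blast
  qed
  have "is_P5 E V q" using q_sub by (intro is_P5_mono[OF q]) auto
  then have "4 \<le> card (set q \<inter> A)" using many by blast
  then obtain a' x' y' z' where q': "is_P5 E (V - insert x (F - {v})) [v, a', x', y', z']"
      "set [v, a', x', y', z'] = set q" "a' \<notin> A" "x' \<in> A" "y' \<in> A" "z' \<in> A"
    by (rule is_P5_through_isolated_vertex[OF \<open>symp E\<close> q _ iso \<open>v \<in> set q\<close>])
  have sym: "E u w \<Longrightarrow> E w u" for u w using \<open>symp E\<close> by (rule sympD)
  show False
  proof (cases "a' = a")
    case True
    have "is_P5 E (V - F) [x, a, x', y', z']"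
      using q'(1) path(1) \<open>x \<notin> F\<close> True sym[of a x] by (auto simp: is_P5_Cons5)
    then show False using free unfolding P5_free_def by blast
  next
    case False
    have "is_P5 E V [a', v, a, x, y]"
      using q'(1,3) path False sym[of v a'] by (auto simp: is_P5_Cons5)
    moreover have "4 \<le> card (set [a', v, a, x, y] \<inter> A)" using calculation many by blast
    ultimately have "a' = a"
      using \<open>a' \<notin> A\<close> path(2) by (intro is_P5_outside_unique[of E V "[a', v, a, x, y]" A]) simp_all
    with False show False by contradiction
  qed
qed

theorem lemma3:
  fixes V V1 V2 :: "'a set" and E :: "'a \<Rightarrow> 'a \<Rightarrow> bool" and k :: int
    and v :: 'a and F :: "'a set"
  assumes G: "simple_graph V E"
    and part: "V1 \<union> V2 = V" "V1 \<inter> V2 = {}"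
    and free1: "P5_free E V1" and free2: "P5_free E V2"
    and k: "k \<ge> 1"
    and hasP5: "\<exists>p. is_P5 E V p"
    and cover: "\<forall>x \<in> V. \<exists>p. is_P5 E V p \<and> x \<in> set p"
    and many: "\<forall>p. is_P5 E V p \<longrightarrow> card (set p \<inter> V2) \<ge> 4"
    and v: "v \<in> V2" "\<forall>u \<in> V2. \<not> E v u"
    and F: "F \<subseteq> V2" "P5_free E (V - F)" "v \<in> F"
  shows "\<exists>F'. F' \<subseteq> V2 \<and> P5_free E (V - F') \<and> v \<notin> F' \<and> card F' \<le> card F"
proof (cases "P5_free E (V - (F - {v}))")
  case True
  then show ?thesis using F(1) card_Diff1_le[of F v] by (intro exI[of _ "F - {v}"]) auto
next
  case False
  then obtain p where p: "is_P5 E (V - (F - {v})) p" unfolding P5_free_def by blast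
  have p_sub: "set p \<subseteq> V - (F - {v})" using p by (rule is_P5_subset)
  have "v \<in> set p"
  proof (rule ccontr)
    assume "v \<notin> set p"
    then have "is_P5 E (V - F) p" using p_sub by (intro is_P5_mono[OF p]) auto
    then show False using F(2) unfolding P5_free_def by blast
  qed
  have "is_P5 E V p" using p_sub by (intro is_P5_mono[OF p]) auto
  then have "4 \<le> card (set p \<inter> V2)" using many by blast
  then obtain a x y z where path: "is_P5 E (V - (F - {v})) [v, a, x, y, z]"
      "set [v, a, x, y, z] = set p" "a \<notin> V2" "x \<in> V2" "y \<in> V2" "z \<in> V2"
    by (rule is_P5_through_isolated_vertex[OF simple_graph_symp[OF G] p _ v(2) \<open>v \<in> set p\<close>])
  have "x \<notin> F" "x \<noteq> v" using path(1) by (auto simp: is_P5_Cons5)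
  have path_V: "is_P5 E V [v, a, x, y, z]" using path(2) p_sub by (intro is_P5_mono[OF path(1)]) auto
  have "finite F"
    using G F(1) part(1) finite_subset unfolding simple_graph_def by blast
  then have "card (insert x (F - {v})) = Suc (card (F - {v}))"
    using \<open>x \<notin> F\<close> by simp
  also have "\<dots> = card F" using \<open>finite F\<close> F(3) by (rule card_Suc_Diff1)
  moreover have "P5_free E (V - insert x (F - {v}))"
    using simple_graph_symp[OF G] many v(2) F(2) path_V path(3-5) \<open>x \<notin> F\<close>
    by (rule P5_free_exchange)
  ultimately show ?thesis
    using F(1) path(4) \<open>x \<noteq> v\<close> by (intro exI[of _ "insert x (F - {v})"]) auto
qed

end
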